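(* Let $n\ge 1$ and let $W\in\mathbb{C}^{2n\times 2n}$ be a normal skew-Hamiltonian matrix all of whose eigenvalues have nonzero imaginary parts. Then there exist a unitary symplectic matrix $U\in\mathbb{C}^{2n\times 2n}$ and a diagonal matrix $D\in\mathbb{C}^{n\times n}$ such that $$W=U\begin{bmatrix} D & 0\\ 0 & D^H\end{bmatrix}U^H .$$
   Context: Let $J=J_{2n}=\begin{bmatrix}0 & I_n\\ -I_n & 0\end{bmatrix}\in\mathbb{R}^{2n\times 2n}$. A matrix $A\in\mathbb{C}^{2n\times 2n}$ is Hamiltonian if $(JA)^H=JA$ and skew-Hamiltonian if $(JA)^H=-JA$. A matrix $Z\in\mathbb{C}^{2n\times 2n}$ is symplectic if $Z^HJZ=J$. "Unitary symplectic" means both unitary and symplectic. *)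

theory Defs
  imports "Jordan_Normal_Form.Matrix" "Jordan_Normal_Form.Char_Poly"
begin

definition conj_tr :: "complex mat \<Rightarrow> complex mat" where
  "conj_tr A = mat (dim_col A) (dim_row A) (\<lambda>(i,j). cnj (A $$ (j,i)))"

definition J_mat :: "nat \<Rightarrow> complex mat" where
  "J_mat n = four_block_mat (0\<^sub>m n n) (1\<^sub>m n) (- 1\<^sub>m n) (0\<^sub>m n n)"

definition hamiltonian :: "nat \<Rightarrow> complex mat \<Rightarrow> bool" where
  "hamiltonian n A \<longleftrightarrow> A \<in> carrier_mat (2*n) (2*n) \<and>
     conj_tr (J_mat n * A) = J_mat n * A"

definition skew_hamiltonian :: "nat \<Rightarrow> complex mat \<Rightarrow> bool" where
  "skew_hamiltonian n A \<longleftrightarrow> A \<in> carrier_mat (2*n) (2*n) \<and>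
     conj_tr (J_mat n * A) = - (J_mat n * A)"

definition symplectic :: "nat \<Rightarrow> complex mat \<Rightarrow> bool" where
  "symplectic n Z \<longleftrightarrow> Z \<in> carrier_mat (2*n) (2*n) \<and>
     conj_tr Z * J_mat n * Z = J_mat n"

definition unitary_mat :: "complex mat \<Rightarrow> bool" where
  "unitary_mat U \<longleftrightarrow> square_mat U \<and> conj_tr U * U = 1\<^sub>m (dim_row U)
     \<and> U * conj_tr U = 1\<^sub>m (dim_row U)"

definition normal_mat :: "complex mat \<Rightarrow> bool" where
  "normal_mat A \<longleftrightarrow> square_mat A \<and> A * conj_tr A = conj_tr A * A"

end

theory Submission
  imports Defs "Jordan_Normal_Form.Schur_Decomposition" "Jordan_Normal_Form.Spectral_Radius"
begin

text \<open>Diagonalise W unitarily, W = Q L Q^H with L = diag(\<lambda>). The matrix A = Q^H J Q is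
  unitary with A^2 = -I, and the skew-Hamiltonian identity J W = W^H J becomes A L = L^H A,
  so the entry of A at (j, k) vanishes unless \<lambda> k is the conjugate of \<lambda> j. As no eigenvalue is
  real, A maps the coordinates with Im \<lambda> > 0 to those with Im \<lambda> < 0 and back, and since A is
  unitary both classes have n elements. If p enumerates the first class, the unit vectors
  e (p i) followed by the vectors -A e (p i) are the columns of a unitary matrix S with
  A S = S J and L S = S diag(D, D^H), where D = diag(\<lambda> (p i)). Then U = Q S is unitary and
  symplectic, and W = U diag(D, D^H) U^H.\<close>

section \<open>Conjugate transpose and block-diagonal matrices\<close>

lemma conj_tr_carrier [simp]: "A \<in> carrier_mat r c \<Longrightarrow> conj_tr A \<in> carrier_mat c r"
  unfolding conj_tr_def by auto

lemma dim_conj_tr [simp]: "dim_row (conj_tr A) = dim_col A" "dim_col (conj_tr A) = dim_row A"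
  unfolding conj_tr_def by auto

lemma index_conj_tr [simp]:
  "i < dim_col A \<Longrightarrow> j < dim_row A \<Longrightarrow> conj_tr A $$ (i, j) = cnj (A $$ (j, i))"
  unfolding conj_tr_def by auto

lemma conj_tr_conj_tr [simp]: "conj_tr (conj_tr A) = A"
  by (rule eq_matI) auto

lemma conj_tr_one [simp]: "conj_tr (1\<^sub>m n) = 1\<^sub>m n"
  by (rule eq_matI) auto

lemma conj_tr_mat_diag [simp]: "conj_tr (mat_diag n f) = mat_diag n (\<lambda>i. cnj (f i))"
  by (rule eq_matI) (auto simp: mat_diag_def)

lemma index_conj_tr_mult:
  assumes "X \<in> carrier_mat r a" "Y \<in> carrier_mat r b" "i < a" "j < b"
  shows "(conj_tr X * Y) $$ (i, j) = (\<Sum>k<r. cnj (X $$ (k, i)) * Y $$ (k, j))"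
  using assms by (simp add: scalar_prod_def atLeast0LessThan)

lemma conj_tr_mult:
  assumes "A \<in> carrier_mat a b" "B \<in> carrier_mat b c"
  shows "conj_tr (A * B) = conj_tr B * conj_tr A"
  by (rule eq_matI) (use assms in \<open>auto simp: scalar_prod_def mult.commute\<close>)

lemma dim_mat_diag [simp]: "dim_row (mat_diag n f) = n" "dim_col (mat_diag n f) = n"
  unfolding mat_diag_def by auto

lemma four_block_mat_diag:
  "four_block_mat (mat_diag a f) (0\<^sub>m a d) (0\<^sub>m d a) (mat_diag d g)
    = mat_diag (a + d) (\<lambda>i. if i < a then f i else g (i - a))"
  by (rule eq_matI) (auto simp: mat_diag_def)

lemma conj_tr_four_block_diag:
  assumes "A \<in> carrier_mat a b" "D \<in> carrier_mat c d"
  shows "conj_tr (four_block_mat A (0\<^sub>m a d) (0\<^sub>m c b) D)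
    = four_block_mat (conj_tr A) (0\<^sub>m b c) (0\<^sub>m d a) (conj_tr D)"
  by (rule eq_matI) (use assms in auto)

lemma mult_four_block_diag:
  fixes A1 :: "'a :: comm_ring_1 mat"
  assumes "A1 \<in> carrier_mat a b" "D1 \<in> carrier_mat c d" "A2 \<in> carrier_mat b e" "D2 \<in> carrier_mat d f"
  shows "four_block_mat A1 (0\<^sub>m a d) (0\<^sub>m c b) D1 * four_block_mat A2 (0\<^sub>m b f) (0\<^sub>m d e) D2
    = four_block_mat (A1 * A2) (0\<^sub>m a f) (0\<^sub>m c e) (D1 * D2)"
  using assms by (subst mult_four_block_mat[of _ a b _ d _ c]) auto

lemma four_block_diag_congruence:
  assumes A: "A \<in> carrier_mat a a" and Q: "Q \<in> carrier_mat d d" and L: "L \<in> carrier_mat d d"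
  shows "four_block_mat A (0\<^sub>m a d) (0\<^sub>m d a) (Q * L * conj_tr Q)
    = four_block_mat (1\<^sub>m a) (0\<^sub>m a d) (0\<^sub>m d a) Q * four_block_mat A (0\<^sub>m a d) (0\<^sub>m d a) L
      * conj_tr (four_block_mat (1\<^sub>m a) (0\<^sub>m a d) (0\<^sub>m d a) Q)"
proof -
  have "four_block_mat (1\<^sub>m a) (0\<^sub>m a d) (0\<^sub>m d a) Q * four_block_mat A (0\<^sub>m a d) (0\<^sub>m d a) L
      = four_block_mat (1\<^sub>m a * A) (0\<^sub>m a d) (0\<^sub>m d a) (Q * L)"
    by (rule mult_four_block_diag) (use A Q L in auto)
  also have "\<dots> * conj_tr (four_block_mat (1\<^sub>m a) (0\<^sub>m a d) (0\<^sub>m d a) Q)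
      = four_block_mat (1\<^sub>m a * A * 1\<^sub>m a) (0\<^sub>m a d) (0\<^sub>m d a) (Q * L * conj_tr Q)"
    unfolding conj_tr_four_block_diag[OF one_carrier_mat Q] conj_tr_one
    by (rule mult_four_block_diag) (use A Q L in auto)
  finally show ?thesis using A by simp
qed

lemma four_block_diag_eqD:
  assumes "A \<in> carrier_mat a b" "A' \<in> carrier_mat a b" "D \<in> carrier_mat c d" "D' \<in> carrier_mat c d"
    and "four_block_mat A (0\<^sub>m a d) (0\<^sub>m c b) D = four_block_mat A' (0\<^sub>m a d) (0\<^sub>m c b) D'"
  shows "D = D'"
proof (rule eq_matI)
  fix i j assume ij: "i < dim_row D'" "j < dim_col D'"
  have "four_block_mat A (0\<^sub>m a d) (0\<^sub>m c b) D $$ (i + a, j + b) = D $$ (i, j)"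
    using assms(1,3,4) ij by (subst index_mat_four_block) auto
  moreover have "four_block_mat A' (0\<^sub>m a d) (0\<^sub>m c b) D' $$ (i + a, j + b) = D' $$ (i, j)"
    using assms(2,4) ij by (subst index_mat_four_block) auto
  ultimately show "D $$ (i, j) = D' $$ (i, j)" using assms(5) by simp
qed (use assms in auto)

section \<open>Unitary matrices\<close>

lemma unitary_matI:
  assumes "U \<in> carrier_mat m m" "conj_tr U * U = 1\<^sub>m m"
  shows "unitary_mat U"
  using assms mat_mult_left_right_inverse[OF conj_tr_carrier[OF assms(1)] assms(1)]
  unfolding unitary_mat_def by auto

lemma unitary_matD:
  assumes "unitary_mat U" "U \<in> carrier_mat m m"
  shows "conj_tr U * U = 1\<^sub>m m" "U * conj_tr U = 1\<^sub>m m"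
  using assms unfolding unitary_mat_def by auto

lemma unitary_mat_conj_tr:
  assumes "unitary_mat U" "U \<in> carrier_mat m m"
  shows "unitary_mat (conj_tr U)"
  using unitary_matD[OF assms] assms(2) by (intro unitary_matI[of _ m]) auto

lemma unitary_mat_mult:
  assumes U: "unitary_mat U" "U \<in> carrier_mat m m" and V: "unitary_mat V" "V \<in> carrier_mat m m"
  shows "unitary_mat (U * V)"
proof (rule unitary_matI)
  have "conj_tr (U * V) * (U * V) = conj_tr V * ((conj_tr U * U) * V)"
    using U V by (simp add: conj_tr_mult[of _ m m _ m] assoc_mult_mat[of _ m m _ m _ m])
  then show "conj_tr (U * V) * (U * V) = 1\<^sub>m m"
    using unitary_matD[OF U] unitary_matD[OF V] V by simp
qed (use U V in auto)

lemma unitary_mat_four_block_diag: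
  assumes A: "A \<in> carrier_mat a a" "unitary_mat A" and D: "D \<in> carrier_mat d d" "unitary_mat D"
  shows "unitary_mat (four_block_mat A (0\<^sub>m a d) (0\<^sub>m d a) D)"
proof (rule unitary_matI)
  show "four_block_mat A (0\<^sub>m a d) (0\<^sub>m d a) D \<in> carrier_mat (a + d) (a + d)" using A D by auto
  show "conj_tr (four_block_mat A (0\<^sub>m a d) (0\<^sub>m d a) D) * four_block_mat A (0\<^sub>m a d) (0\<^sub>m d a) D
      = 1\<^sub>m (a + d)"
    using A D unitary_matD[OF A(2,1)] unitary_matD[OF D(2,1)]
    by (simp add: conj_tr_four_block_diag[where a=a and b=a and c=d and d=d]
        mult_four_block_diag[where a=a and b=a and c=d and d=d and e=a and f=d])
qed

lemma conj_tr_congruence_mult: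
  assumes W: "W \<in> carrier_mat m m" and R: "R \<in> carrier_mat m m" and L: "L \<in> carrier_mat m m"
  shows "W * (R * L * conj_tr R) * conj_tr W = (W * R) * L * conj_tr (W * R)"
proof -
  have [simp]: "conj_tr W \<in> carrier_mat m m" "conj_tr R \<in> carrier_mat m m" using W R by auto
  have [simp]: "X * Y \<in> carrier_mat m m" if "X \<in> carrier_mat m m" "Y \<in> carrier_mat m m" for X Y
    using that by simp
  show ?thesis
    using W R L by (simp add: conj_tr_mult[of _ m m _ m] assoc_mult_mat[of _ m m _ m _ m])
qed

lemma unitary_conj_cancel:
  assumes A: "A \<in> carrier_mat m m" and W: "W \<in> carrier_mat m m" "unitary_mat W"
  shows "W * (conj_tr W * A * W) * conj_tr W = A"
proof -
  have [simp]: "conj_tr W \<in> carrier_mat m m" using W by simp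
  have [simp]: "X * Y \<in> carrier_mat m m" if "X \<in> carrier_mat m m" "Y \<in> carrier_mat m m" for X Y
    using that by simp
  have "W * (conj_tr W * A * W) * conj_tr W = (W * conj_tr W) * A * (W * conj_tr W)"
    using A W by (simp add: assoc_mult_mat[of _ m m _ m _ m])
  then show ?thesis using A unitary_matD[OF W(2,1)] by simp
qed

lemma unitary_congruence_mult_right:
  assumes Q: "Q \<in> carrier_mat m m" "unitary_mat Q" and L: "L \<in> carrier_mat m m"
  shows "Q * L * conj_tr Q * Q = Q * L"
proof -
  have "Q * L * conj_tr Q * Q = Q * L * (conj_tr Q * Q)"
    by (rule assoc_mult_mat) (use Q L in auto)
  then show ?thesis using unitary_matD[OF Q(2,1)] Q L by simp
qed

lemma unitary_conj_mult:
  assumes Q: "Q \<in> carrier_mat m m" "unitary_mat Q" and X: "X \<in> carrier_mat m m" and Y: "Y \<in> carrier_mat m m"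
  shows "(conj_tr Q * X * Q) * (conj_tr Q * Y * Q) = conj_tr Q * (X * Y) * Q"
proof -
  have [simp]: "conj_tr Q \<in> carrier_mat m m" using Q by simp
  have [simp]: "A * B \<in> carrier_mat m m" if "A \<in> carrier_mat m m" "B \<in> carrier_mat m m" for A B
    using that by simp
  have "(conj_tr Q * X * Q) * (conj_tr Q * Y * Q) = conj_tr Q * (X * ((Q * conj_tr Q) * (Y * Q)))"
    using Q X Y by (simp add: assoc_mult_mat[of _ m m _ m _ m])
  also have "\<dots> = conj_tr Q * (X * Y) * Q"
    using Q X Y unitary_matD[OF Q(2,1)] by (simp add: assoc_mult_mat[of _ m m _ m _ m])
  finally show ?thesis .
qed

lemma unitary_intertwining_congruence:
  assumes S: "S \<in> carrier_mat m m" "unitary_mat S" and L: "L \<in> carrier_mat m m"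
    and M: "M \<in> carrier_mat m m" and LS: "L * S = S * M"
  shows "L = S * M * conj_tr S"
proof -
  have "L = L * S * conj_tr S"
    using S L unitary_matD[OF S(2,1)] assoc_mult_mat[OF L S(1) conj_tr_carrier[OF S(1)]] by simp
  then show ?thesis unfolding LS .
qed

lemma cscalar_prod_smult:
  fixes v w :: "complex vec"
  assumes "v \<in> carrier_vec n" "w \<in> carrier_vec n"
  shows "(a \<cdot>\<^sub>v v) \<bullet>c (b \<cdot>\<^sub>v w) = a * cnj b * (v \<bullet>c w)"
  using assms by (simp add: conjugate_smult_vec)

lemma cscalar_prod_self_real:
  fixes v :: "complex vec"
  shows "v \<bullet>c v = complex_of_real (Re (v \<bullet>c v))"
  using conjugate_square_ge_0_vec[of v] by (simp add: less_eq_complex_def complex_eq_iff)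

definition vec_normalize :: "complex vec \<Rightarrow> complex vec" where
  "vec_normalize v = complex_of_real (1 / sqrt (Re (v \<bullet>c v))) \<cdot>\<^sub>v v"

lemma vec_normalize_carrier [simp]: "v \<in> carrier_vec n \<Longrightarrow> vec_normalize v \<in> carrier_vec n"
  unfolding vec_normalize_def by simp

lemma vec_normalize_unit:
  assumes "v \<in> carrier_vec n" "v \<noteq> 0\<^sub>v n"
  shows "vec_normalize v \<bullet>c vec_normalize v = 1"
proof -
  define r where "r = Re (v \<bullet>c v)"
  have "v \<bullet>c v = complex_of_real r" "v \<bullet>c v \<noteq> 0"
    using cscalar_prod_self_real[of v] assms unfolding r_def by auto
  then have "r > 0"
    using conjugate_square_ge_0_vec[of v] by (auto simp: less_eq_complex_def)
  have "1 / sqrt r * (1 / sqrt r) * r = 1" using \<open>r > 0\<close> by (simp add: field_simps)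
  then have "complex_of_real (1 / sqrt r) * cnj (complex_of_real (1 / sqrt r)) * complex_of_real r = 1"
    by (metis of_real_mult of_real_1 complex_cnj_complex_of_real)
  then show ?thesis
    unfolding vec_normalize_def cscalar_prod_smult[OF assms(1) assms(1)] r_def[symmetric]
    unfolding \<open>v \<bullet>c v = complex_of_real r\<close> .
qed

lemma vec_normalize_orthogonal:
  assumes "v \<in> carrier_vec n" "w \<in> carrier_vec n" "v \<bullet>c w = 0"
  shows "vec_normalize v \<bullet>c vec_normalize w = 0"
  unfolding vec_normalize_def cscalar_prod_smult[OF assms(1,2)] assms(3) by simp

lemma vec_normalize_id: "v \<bullet>c v = 1 \<Longrightarrow> vec_normalize v = v"
  unfolding vec_normalize_def by simp

lemma unitary_mat_of_cols:
  assumes ws: "set ws \<subseteq> carrier_vec m" "length ws = m"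
    and orthonormal: "\<And>i j. i < m \<Longrightarrow> j < m \<Longrightarrow> ws ! j \<bullet>c ws ! i = (if i = j then 1 else 0)"
  shows "unitary_mat (mat_of_cols m ws)"
proof (rule unitary_matI)
  show W: "mat_of_cols m ws \<in> carrier_mat m m" using ws by auto
  show "conj_tr (mat_of_cols m ws) * mat_of_cols m ws = 1\<^sub>m m"
  proof (rule eq_matI)
    fix i j assume "i < dim_row (1\<^sub>m m)" "j < dim_col (1\<^sub>m m)"
    then have ij: "i < m" "j < m" by auto
    have "(conj_tr (mat_of_cols m ws) * mat_of_cols m ws) $$ (i, j)
        = (\<Sum>k<m. ws ! j $ k * cnj (ws ! i $ k))"
      unfolding index_conj_tr_mult[OF W W ij]
      using ws ij by (auto simp: mat_of_cols_index mult.commute)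
    also have "\<dots> = ws ! j \<bullet>c ws ! i"
    proof -
      have "ws ! i \<in> carrier_vec m" using ws ij by auto
      then show ?thesis by (simp add: scalar_prod_def atLeast0LessThan)
    qed
    also have "\<dots> = 1\<^sub>m m $$ (i, j)" using orthonormal[OF ij] ij by simp
    finally show "(conj_tr (mat_of_cols m ws) * mat_of_cols m ws) $$ (i, j) = 1\<^sub>m m $$ (i, j)" .
  qed (use ws in auto)
qed

lemma unitary_mat_extending_unit_vec:
  fixes u :: "complex vec"
  assumes u: "u \<in> carrier_vec m" "u \<bullet>c u = 1" and "0 < m"
  obtains W where "W \<in> carrier_mat m m" "unitary_mat W" "col W 0 = u"
proof -
  interpret cof_vec_space m "TYPE(complex)" .
  have "u \<noteq> 0\<^sub>v m" using u by auto
  note completion = basis_completion[OF u(1) this]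
  then obtain vs where vs: "basis_completion u = u # vs"
    using \<open>0 < m\<close> by (cases "basis_completion u") auto
  define gs where "gs = gram_schmidt m (basis_completion u)"
  have gs: "set gs \<subseteq> carrier_vec m" "corthogonal gs" "length gs = m"
    using gram_schmidt_result[OF completion(2,4,5) gs_def] completion by auto
  define ws where "ws = map vec_normalize gs"
  have ws: "set ws \<subseteq> carrier_vec m" "length ws = m" using gs unfolding ws_def by auto
  have "ws ! j \<bullet>c ws ! i = (if i = j then 1 else 0)" if "i < m" "j < m" for i j
    using gs that corthogonalD[OF gs(2), of j i] corthogonalD[OF gs(2), of i i]
    by (auto simp: ws_def intro!: vec_normalize_unit vec_normalize_orthogonal)
  then have "unitary_mat (mat_of_cols m ws)" by (rule unitary_mat_of_cols[OF ws])
  moreover have "col (mat_of_cols m ws) 0 = u"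
  proof -
    have "gs ! 0 = u"
      using gs(3) \<open>0 < m\<close> gram_schmidt_hd[OF u(1), of vs] hd_conv_nth[of gs]
      by (metis gs_def vs list.size(3) less_numeral_extra(3))
    then show ?thesis using ws gs \<open>0 < m\<close> u by (simp add: ws_def vec_normalize_id)
  qed
  ultimately show ?thesis using that[of "mat_of_cols m ws"] ws by auto
qed

section \<open>Spectral theorem for normal matrices\<close>

lemma normal_mat_unitary_conj:
  assumes A: "A \<in> carrier_mat m m" "normal_mat A" and W: "W \<in> carrier_mat m m" "unitary_mat W"
  shows "normal_mat (conj_tr W * A * W)"
proof -
  have [simp]: "conj_tr W \<in> carrier_mat m m" "conj_tr A \<in> carrier_mat m m" using A W by auto
  have [simp]: "X * Y \<in> carrier_mat m m" if "X \<in> carrier_mat m m" "Y \<in> carrier_mat m m" for X Y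
    using that by simp
  have cancel: "W * (conj_tr W * X) = X" if "X \<in> carrier_mat m m" for X
    using W that unitary_matD[OF W(2,1)] by (simp flip: assoc_mult_mat[of _ m m _ m _ m])
  have "conj_tr W * A * W * conj_tr (conj_tr W * A * W) = conj_tr W * (A * conj_tr A) * W"
    using A W by (simp add: conj_tr_mult[of _ m m _ m] assoc_mult_mat[of _ m m _ m _ m] cancel)
  also have "\<dots> = conj_tr W * (conj_tr A * A) * W"
    using A unfolding normal_mat_def by simp
  also have "\<dots> = conj_tr (conj_tr W * A * W) * (conj_tr W * A * W)"
    using A W by (simp add: conj_tr_mult[of _ m m _ m] assoc_mult_mat[of _ m m _ m _ m] cancel)
  finally show ?thesis using A W unfolding normal_mat_def by auto
qed

lemma normal_mat_four_block_diag:
  assumes "A \<in> carrier_mat a a" "D \<in> carrier_mat d d"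
    and "normal_mat (four_block_mat A (0\<^sub>m a d) (0\<^sub>m d a) D)"
  shows "normal_mat D"
proof -
  have "four_block_mat (A * conj_tr A) (0\<^sub>m a d) (0\<^sub>m d a) (D * conj_tr D)
      = four_block_mat (conj_tr A * A) (0\<^sub>m a d) (0\<^sub>m d a) (conj_tr D * D)"
    using assms unfolding normal_mat_def
    by (simp add: conj_tr_four_block_diag[where a=a and b=a and c=d and d=d]
        mult_four_block_diag[where a=a and b=a and c=d and d=d and e=a and f=d])
  then have "D * conj_tr D = conj_tr D * D"
    by (rule four_block_diag_eqD[where a=a and b=a and c=d and d=d, rotated 4]) (use assms in auto)
  then show ?thesis using assms(2) unfolding normal_mat_def by auto
qed

text \<open>A normal matrix has rows and columns of equal norms, so a first column that is
  a multiple of the first unit vector forces the first row to vanish off the diagonal.\<close>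
lemma normal_mat_first_row_zero:
  assumes A: "A \<in> carrier_mat (Suc k) (Suc k)" "normal_mat A"
    and col0: "\<And>i. 0 < i \<Longrightarrow> i < Suc k \<Longrightarrow> A $$ (i, 0) = 0"
    and "0 < j" "j < Suc k"
  shows "A $$ (0, j) = 0"
proof -
  have "(A * conj_tr A) $$ (0, 0) = (conj_tr A * A) $$ (0, 0)"
    using A unfolding normal_mat_def by simp
  then have "A $$ (0, 0) * cnj (A $$ (0, 0)) + (\<Sum>l<k. A $$ (0, Suc l) * cnj (A $$ (0, Suc l)))
      = cnj (A $$ (0, 0)) * A $$ (0, 0)"
    using A col0 by (simp add: scalar_prod_def atLeast0LessThan sum.lessThan_Suc_shift
        del: sum.lessThan_Suc)
  then have "(\<Sum>l<k. complex_of_real ((cmod (A $$ (0, Suc l)))\<^sup>2)) = 0"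
    by (simp only: complex_norm_square) simp
  then have "(\<Sum>l<k. (cmod (A $$ (0, Suc l)))\<^sup>2) = 0"
    by (metis of_real_sum of_real_eq_0_iff)
  then have "\<forall>l<k. (cmod (A $$ (0, Suc l)))\<^sup>2 = 0"
    by (subst (asm) sum_nonneg_eq_0_iff) auto
  then show ?thesis using \<open>0 < j\<close> \<open>j < Suc k\<close> by (cases j) auto
qed

lemma unitary_conj_eigenvector_col:
  assumes A: "A \<in> carrier_mat m m" and W: "W \<in> carrier_mat m m" "unitary_mat W"
    and ev: "A *\<^sub>v col W 0 = e \<cdot>\<^sub>v col W 0" and "0 < m"
  shows "col (conj_tr W * A * W) 0 = e \<cdot>\<^sub>v unit_vec m 0"
proof -
  have "col (conj_tr W * A * W) 0 = (conj_tr W * A) *\<^sub>v col W 0"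
    by (rule col_mult2) (use A W \<open>0 < m\<close> in auto)
  also have "\<dots> = conj_tr W *\<^sub>v (A *\<^sub>v col W 0)"
    by (rule assoc_mult_mat_vec) (use A W in auto)
  also have "\<dots> = e \<cdot>\<^sub>v col (conj_tr W * W) 0"
    using A W \<open>0 < m\<close> by (simp add: ev mult_mat_vec[of _ m m] col_mult2[of _ m m W m])
  finally show ?thesis using unitary_matD[OF W(2,1)] \<open>0 < m\<close> by simp
qed

lemma normal_mat_unitary_deflation:
  assumes A: "A \<in> carrier_mat (Suc k) (Suc k)" "normal_mat A"
  obtains W e B where "W \<in> carrier_mat (Suc k) (Suc k)" "unitary_mat W"
    "B \<in> carrier_mat k k" "normal_mat B"
    "conj_tr W * A * W = four_block_mat (mat_diag 1 (\<lambda>_. e)) (0\<^sub>m 1 k) (0\<^sub>m k 1) B"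
proof -
  obtain e where "eigenvalue A e" using spectrum_non_empty[OF A(1)] unfolding spectrum_def by auto
  then obtain v where v: "v \<in> carrier_vec (Suc k)" "v \<noteq> 0\<^sub>v (Suc k)" "A *\<^sub>v v = e \<cdot>\<^sub>v v"
    using A unfolding eigenvalue_def eigenvector_def by auto
  obtain W where W: "W \<in> carrier_mat (Suc k) (Suc k)" "unitary_mat W" "col W 0 = vec_normalize v"
    using unitary_mat_extending_unit_vec[OF vec_normalize_carrier[OF v(1)]
        vec_normalize_unit[OF v(1,2)] zero_less_Suc] by blast
  have ev: "A *\<^sub>v col W 0 = e \<cdot>\<^sub>v col W 0"
    using A v unfolding W(3) vec_normalize_def
    by (simp add: mult_mat_vec[of _ "Suc k" "Suc k"] smult_smult_assoc mult.commute)
  define A' where "A' = conj_tr W * A * W"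
  have A': "A' \<in> carrier_mat (Suc k) (Suc k)" "normal_mat A'"
    using A W normal_mat_unitary_conj unfolding A'_def by auto
  have col0: "A' $$ (i, 0) = (if i = 0 then e else 0)" if "i < Suc k" for i
    using arg_cong[OF unitary_conj_eigenvector_col[OF A(1) W(1,2) ev], of "\<lambda>x. x $ i"] A' that
    unfolding A'_def by auto
  have row0: "A' $$ (0, j) = 0" if "0 < j" "j < Suc k" for j
    using normal_mat_first_row_zero[OF A'] col0 that by simp
  define B where "B = mat k k (\<lambda>(i, j). A' $$ (Suc i, Suc j))"
  have split: "A' = four_block_mat (mat_diag 1 (\<lambda>_. e)) (0\<^sub>m 1 k) (0\<^sub>m k 1) B"
  proof (rule eq_matI)
    fix i j assume "i < dim_row (four_block_mat (mat_diag 1 (\<lambda>_. e)) (0\<^sub>m 1 k) (0\<^sub>m k 1) B)"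
      "j < dim_col (four_block_mat (mat_diag 1 (\<lambda>_. e)) (0\<^sub>m 1 k) (0\<^sub>m k 1) B)"
    then have "i < Suc k" "j < Suc k" by (auto simp: B_def)
    then show "A' $$ (i, j) = four_block_mat (mat_diag 1 (\<lambda>_. e)) (0\<^sub>m 1 k) (0\<^sub>m k 1) B $$ (i, j)"
      using col0 row0 by (cases i; cases j) (auto simp: B_def mat_diag_def)
  qed (use A' in \<open>auto simp: B_def\<close>)
  have B: "B \<in> carrier_mat k k" by (simp add: B_def)
  then have "normal_mat B"
    using normal_mat_four_block_diag[OF mat_diag_dim] A'(2) split by metis
  from that[OF W(1,2) B this split[unfolded A'_def]] show ?thesis .
qed

theorem normal_mat_unitary_diagonalizable:
  assumes "A \<in> carrier_mat m m" "normal_mat A"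
  shows "\<exists>Q f. Q \<in> carrier_mat m m \<and> unitary_mat Q \<and> A = Q * mat_diag m f * conj_tr Q"
  using assms
proof (induction m arbitrary: A)
  case 0
  then show ?case
    by (intro exI[of _ "1\<^sub>m 0"] exI[of _ "\<lambda>_. 0"]) (auto simp: unitary_mat_def intro!: eq_matI)
next
  case (Suc k)
  obtain W e B where W: "W \<in> carrier_mat (Suc k) (Suc k)" "unitary_mat W"
    and B: "B \<in> carrier_mat k k" "normal_mat B"
    and deflate: "conj_tr W * A * W = four_block_mat (mat_diag 1 (\<lambda>_. e)) (0\<^sub>m 1 k) (0\<^sub>m k 1) B"
    using normal_mat_unitary_deflation[OF Suc.prems] by blast
  obtain Q' f where Q': "Q' \<in> carrier_mat k k" "unitary_mat Q'" and "B = Q' * mat_diag k f * conj_tr Q'"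
    using Suc.IH[OF B] by blast
  define R where "R = four_block_mat (1\<^sub>m 1) (0\<^sub>m 1 k) (0\<^sub>m k 1) Q'"
  define g where "g i = (if i = 0 then e else f (i - 1))" for i
  have R: "R \<in> carrier_mat (Suc k) (Suc k)" "unitary_mat R"
    using Q' unitary_mat_four_block_diag[of "1\<^sub>m 1" 1 Q' k] unfolding R_def
    by (auto simp: unitary_mat_def)
  have "four_block_mat (mat_diag 1 (\<lambda>_. e)) (0\<^sub>m 1 k) (0\<^sub>m k 1) (mat_diag k f) = mat_diag (1 + k) g"
    unfolding four_block_mat_diag g_def by (simp add: less_Suc_eq_0_disj)
  then have "conj_tr W * A * W = R * mat_diag (Suc k) g * conj_tr R"
    unfolding deflate \<open>B = Q' * mat_diag k f * conj_tr Q'\<close> R_def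
    using four_block_diag_congruence[OF mat_diag_dim Q'(1) mat_diag_dim] by simp
  then have "A = W * (R * mat_diag (Suc k) g * conj_tr R) * conj_tr W"
    using unitary_conj_cancel[OF Suc.prems(1) W] by simp
  also have "\<dots> = (W * R) * mat_diag (Suc k) g * conj_tr (W * R)"
    by (rule conj_tr_congruence_mult) (use W R in auto)
  finally have "A = (W * R) * mat_diag (Suc k) g * conj_tr (W * R)" .
  moreover have "W * R \<in> carrier_mat (Suc k) (Suc k)" using W R by simp
  ultimately show ?case using unitary_mat_mult[OF W(2,1) R(2,1)] by blast
qed

lemma eigenvalue_unitary_diagonalization:
  assumes Q: "Q \<in> carrier_mat m m" "unitary_mat Q" and A: "A = Q * mat_diag m f * conj_tr Q"
    and "k < m"
  shows "eigenvalue A (f k)"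
proof -
  have AQ: "A * Q = Q * mat_diag m f"
    unfolding A by (rule unitary_congruence_mult_right[OF Q mat_diag_dim])
  have Ac: "A \<in> carrier_mat m m" unfolding A by (meson Q(1) conj_tr_carrier mat_diag_dim mult_carrier_mat)
  have "A *\<^sub>v col Q k = col (Q * mat_diag m f) k"
    using col_mult2[OF Ac Q(1) \<open>k < m\<close>] unfolding AQ by simp
  also have "\<dots> = f k \<cdot>\<^sub>v col Q k"
    using Q \<open>k < m\<close> by (auto simp: mat_diag_mult_right[of _ m m] intro!: eq_vecI)
  finally have ev: "A *\<^sub>v col Q k = f k \<cdot>\<^sub>v col Q k" .
  have "col Q k \<noteq> 0\<^sub>v m"
  proof
    assume "col Q k = 0\<^sub>v m"
    then have "(conj_tr Q * Q) $$ (k, k) = 0"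
      unfolding index_conj_tr_mult[OF Q(1) Q(1) \<open>k < m\<close> \<open>k < m\<close>]
      using Q \<open>k < m\<close> by (simp add: col_def vec_eq_iff)
    then show False using unitary_matD[OF Q(2,1)] \<open>k < m\<close> by simp
  qed
  then show ?thesis
    using ev Q Ac unfolding eigenvalue_def eigenvector_def by (intro exI[of _ "col Q k"]) auto
qed

section \<open>Matrices intertwining a diagonal matrix with its conjugate\<close>

lemma mat_diag_intertwining_entry:
  fixes M :: "'a :: field mat"
  assumes "M \<in> carrier_mat m m" "M * mat_diag m f = mat_diag m g * M"
    and "j < m" "k < m" "M $$ (j, k) \<noteq> 0"
  shows "f k = g j"
proof -
  have "M $$ (j, k) * f k = g j * M $$ (j, k)"
    using arg_cong[OF assms(2), of "\<lambda>X. X $$ (j, k)"] assms(1,3,4)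
    by (simp add: mat_diag_mult_left[of _ m m] mat_diag_mult_right[of _ m m])
  then show ?thesis using assms(5) by (simp add: mult.commute[of "M $$ (j, k)"])
qed

lemma unitary_conj_intertwining:
  assumes Q: "Q \<in> carrier_mat m m" "unitary_mat Q" and W: "W = Q * mat_diag m f * conj_tr Q"
    and X: "X \<in> carrier_mat m m" "X * W = conj_tr W * X"
  shows "(conj_tr Q * X * Q) * mat_diag m f = mat_diag m (\<lambda>i. cnj (f i)) * (conj_tr Q * X * Q)"
proof -
  let ?L = "mat_diag m f"
  have QH: "conj_tr Q \<in> carrier_mat m m" using Q by simp
  have Wc: "W \<in> carrier_mat m m"
    unfolding W by (meson Q(1) conj_tr_carrier mat_diag_dim mult_carrier_mat)
  have WH: "conj_tr W \<in> carrier_mat m m" using Wc by simp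
  have QHX: "conj_tr Q * X \<in> carrier_mat m m" using QH X by simp
  have WQ: "W * Q = Q * ?L"
    unfolding W by (rule unitary_congruence_mult_right[OF Q mat_diag_dim])
  have QW: "conj_tr Q * conj_tr W = conj_tr ?L * conj_tr Q"
    using arg_cong[OF WQ, of conj_tr] Q Wc by (simp add: conj_tr_mult[of _ m m _ m])
  have "(conj_tr Q * X * Q) * ?L = conj_tr Q * X * (W * Q)"
    unfolding WQ by (rule assoc_mult_mat[OF QHX Q(1) mat_diag_dim])
  also have "\<dots> = conj_tr Q * (X * W) * Q"
    using assoc_mult_mat[OF QHX Wc Q(1)] assoc_mult_mat[OF QH X(1) Wc] by simp
  also have "\<dots> = (conj_tr Q * conj_tr W) * X * Q"
    unfolding X(2) using assoc_mult_mat[OF QH WH X(1)] by simp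
  also have "\<dots> = conj_tr ?L * (conj_tr Q * X * Q)"
    unfolding QW using assoc_mult_mat[OF conj_tr_carrier[OF mat_diag_dim] QH X(1)]
      assoc_mult_mat[OF conj_tr_carrier[OF mat_diag_dim] QHX Q(1)] by simp
  finally show ?thesis by simp
qed

text \<open>Both cardinalities equal the sum of the squared moduli of the entries of A with row
  in N and column in P, summed once column by column and once row by row.\<close>
lemma card_eq_if_unitary_off_diagonal_blocks:
  assumes A: "A \<in> carrier_mat m m" "unitary_mat A"
    and PN: "P \<union> N = {..<m}" "P \<inter> N = {}"
    and zero: "\<And>j k. j \<in> P \<and> k \<in> P \<or> j \<in> N \<and> k \<in> N \<Longrightarrow> A $$ (j, k) = 0"
  shows "card P = card N"
proof -
  define w where "w j k = cnj (A $$ (j, k)) * A $$ (j, k)" for j k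
  have fin: "finite P" "finite N" using PN(1) finite_subset[of _ "{..<m}"] by auto
  have col: "(\<Sum>j<m. w j k) = 1" if "k < m" for k
    using index_conj_tr_mult[OF A(1) A(1) that that] unitary_matD[OF A(2,1)] that
    by (simp add: w_def)
  have row: "(\<Sum>k<m. w j k) = 1" if "j < m" for j
    using arg_cong[OF unitary_matD(2)[OF A(2,1)], of "\<lambda>M. M $$ (j, j)"] A(1) that
    by (simp add: w_def scalar_prod_def atLeast0LessThan mult.commute)
  have split: "(\<Sum>i<m. g i) = (\<Sum>i\<in>P. g i) + (\<Sum>i\<in>N. g i)" for g :: "nat \<Rightarrow> complex"
    unfolding PN(1)[symmetric] by (rule sum.union_disjoint[OF fin PN(2)])
  have "of_nat (card P) = (\<Sum>k\<in>P. 1::complex)" by simp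
  also have "\<dots> = (\<Sum>k\<in>P. \<Sum>j<m. w j k)" using col PN(1) by (intro sum.cong) auto
  also have "\<dots> = (\<Sum>k\<in>P. \<Sum>j\<in>N. w j k)"
    unfolding split using zero by (simp add: w_def)
  also have "\<dots> = (\<Sum>j\<in>N. \<Sum>k\<in>P. w j k)"
    by (rule sum.swap)
  also have "\<dots> = (\<Sum>j\<in>N. \<Sum>k<m. w j k)"
    unfolding split using zero by (simp add: w_def)
  also have "\<dots> = (\<Sum>j\<in>N. 1::complex)" using row PN(1) by (intro sum.cong) auto
  also have "\<dots> = of_nat (card N)" by simp
  finally show ?thesis by (simp only: of_nat_eq_iff)
qed

section \<open>Symplectic frames\<close>

lemma J_mat_carrier [simp]: "J_mat n \<in> carrier_mat (2 * n) (2 * n)"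
  unfolding J_mat_def by (simp add: mult_2)

lemma dim_J_mat [simp]: "dim_row (J_mat n) = 2 * n" "dim_col (J_mat n) = 2 * n"
  using J_mat_carrier[of n] unfolding carrier_mat_def by auto

lemma index_J_mat:
  assumes "i < 2 * n" "j < 2 * n"
  shows "J_mat n $$ (i, j) = (if i < n \<and> j = i + n then 1 else if n \<le> i \<and> i = j + n then -1 else 0)"
  unfolding J_mat_def using assms by (subst index_mat_four_block) auto

lemma conj_tr_J_mat: "conj_tr (J_mat n) = - J_mat n"
  by (rule eq_matI) (auto simp: index_J_mat)

lemma J_mat_mult_J_mat: "J_mat n * J_mat n = - 1\<^sub>m (2 * n)"
proof -
  have "J_mat n * J_mat n = four_block_mat (0\<^sub>m n n * 0\<^sub>m n n + 1\<^sub>m n * - 1\<^sub>m n)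
      (0\<^sub>m n n * 1\<^sub>m n + 1\<^sub>m n * 0\<^sub>m n n) (- 1\<^sub>m n * 0\<^sub>m n n + 0\<^sub>m n n * - 1\<^sub>m n)
      (- 1\<^sub>m n * 1\<^sub>m n + 0\<^sub>m n n * 0\<^sub>m n n)"
    unfolding J_mat_def by (rule mult_four_block_mat) auto
  also have "\<dots> = - 1\<^sub>m (2 * n)" by (rule eq_matI) auto
  finally show ?thesis .
qed

lemma unitary_J_mat: "unitary_mat (J_mat n)"
  by (rule unitary_matI[OF J_mat_carrier]) (simp add: conj_tr_J_mat J_mat_mult_J_mat)

lemma unitary_conj_J_mat:
  assumes Q: "Q \<in> carrier_mat (2 * n) (2 * n)" "unitary_mat Q"
  defines "A \<equiv> conj_tr Q * J_mat n * Q"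
  shows "A \<in> carrier_mat (2 * n) (2 * n)" "unitary_mat A" "A * A = - 1\<^sub>m (2 * n)"
proof -
  have QJ: "conj_tr Q * J_mat n \<in> carrier_mat (2 * n) (2 * n)"
    by (rule mult_carrier_mat[OF conj_tr_carrier[OF Q(1)] J_mat_carrier])
  show "A \<in> carrier_mat (2 * n) (2 * n)" unfolding A_def by (rule mult_carrier_mat[OF QJ Q(1)])
  have "unitary_mat (conj_tr Q * J_mat n)"
    by (rule unitary_mat_mult[OF unitary_mat_conj_tr[OF Q(2,1)] conj_tr_carrier[OF Q(1)]
          unitary_J_mat J_mat_carrier])
  then show "unitary_mat A" unfolding A_def by (rule unitary_mat_mult[OF _ QJ Q(2,1)])
  show "A * A = - 1\<^sub>m (2 * n)"
    using unitary_conj_mult[OF Q J_mat_carrier J_mat_carrier] unitary_matD[OF Q(2,1)] Q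
    unfolding A_def J_mat_mult_J_mat by simp
qed

lemma skew_hamiltonian_iff:
  "skew_hamiltonian n W \<longleftrightarrow> W \<in> carrier_mat (2 * n) (2 * n) \<and> J_mat n * W = conj_tr W * J_mat n"
proof -
  have "conj_tr (J_mat n * W) = - (conj_tr W * J_mat n)" if "W \<in> carrier_mat (2 * n) (2 * n)"
    using that by (simp add: conj_tr_mult[OF J_mat_carrier] conj_tr_J_mat)
  then show ?thesis unfolding skew_hamiltonian_def by auto
qed

lemma symplectic_mult:
  assumes Q: "Q \<in> carrier_mat (2 * n) (2 * n)" and S: "S \<in> carrier_mat (2 * n) (2 * n)" "unitary_mat S"
    and intertwining: "(conj_tr Q * J_mat n * Q) * S = S * J_mat n"
  shows "symplectic n (Q * S)"
proof -
  have [simp]: "conj_tr Q \<in> carrier_mat (2 * n) (2 * n)" "conj_tr S \<in> carrier_mat (2 * n) (2 * n)"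
    using Q S by auto
  have [simp]: "A * B \<in> carrier_mat (2 * n) (2 * n)"
    if "A \<in> carrier_mat (2 * n) (2 * n)" "B \<in> carrier_mat (2 * n) (2 * n)" for A B
    using that by simp
  have "conj_tr (Q * S) * J_mat n * (Q * S) = conj_tr S * ((conj_tr Q * J_mat n * Q) * S)"
    using Q S by (simp add: conj_tr_mult[of _ "2 * n" "2 * n" _ "2 * n"]
        assoc_mult_mat[of _ "2 * n" "2 * n" _ "2 * n" _ "2 * n"])
  also have "\<dots> = (conj_tr S * S) * J_mat n"
    unfolding intertwining using S by (simp add: assoc_mult_mat[of _ "2 * n" "2 * n" _ "2 * n" _ "2 * n"])
  finally show ?thesis
    using Q S unitary_matD[OF S(2,1)] unfolding symplectic_def by simp
qed

definition symplectic_frame :: "nat \<Rightarrow> complex mat \<Rightarrow> (nat \<Rightarrow> nat) \<Rightarrow> complex mat" where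
  "symplectic_frame n A p = mat (2 * n) (2 * n)
     (\<lambda>(r, c). if c < n then (if r = p c then 1 else 0) else - A $$ (r, p (c - n)))"

lemma symplectic_frame_carrier [simp]: "symplectic_frame n A p \<in> carrier_mat (2 * n) (2 * n)"
  unfolding symplectic_frame_def by simp

lemma dim_symplectic_frame [simp]:
  "dim_row (symplectic_frame n A p) = 2 * n" "dim_col (symplectic_frame n A p) = 2 * n"
  unfolding symplectic_frame_def by auto

lemma index_symplectic_frame:
  "r < 2 * n \<Longrightarrow> c < 2 * n \<Longrightarrow> symplectic_frame n A p $$ (r, c)
    = (if c < n then (if r = p c then 1 else 0) else - A $$ (r, p (c - n)))"
  unfolding symplectic_frame_def by simp

lemma index_conj_tr_symplectic_frame_mult:
  assumes A: "A \<in> carrier_mat (2 * n) (2 * n)" and p: "\<And>i. i < n \<Longrightarrow> p i < 2 * n"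
    and cd: "c < 2 * n" "d < 2 * n"
  defines "S \<equiv> symplectic_frame n A p"
  shows "(conj_tr S * S) $$ (c, d) = (if c < n then S $$ (p c, d) else if d < n then cnj (S $$ (p d, c))
    else (conj_tr A * A) $$ (p (c - n), p (d - n)))"
proof -
  have prod: "(conj_tr S * S) $$ (c, d) = (\<Sum>r<2 * n. cnj (S $$ (r, c)) * S $$ (r, d))"
    unfolding S_def by (rule index_conj_tr_mult[OF symplectic_frame_carrier symplectic_frame_carrier cd])
  consider "c < n" | "\<not> c < n" "d < n" | "\<not> c < n" "\<not> d < n" by blast
  then show ?thesis
  proof cases
    case 1
    have "(conj_tr S * S) $$ (c, d) = (\<Sum>r<2 * n. if r = p c then S $$ (r, d) else 0)"
      unfolding prod using cd 1 by (intro sum.cong) (auto simp: S_def index_symplectic_frame)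
    then show ?thesis using p[OF 1] 1 by simp
  next
    case 2
    have "(conj_tr S * S) $$ (c, d) = (\<Sum>r<2 * n. if r = p d then cnj (S $$ (r, c)) else 0)"
      unfolding prod using cd 2 by (intro sum.cong) (auto simp: S_def index_symplectic_frame)
    then show ?thesis using p[OF 2(2)] 2 by simp
  next
    case 3
    then have "c - n < n" "d - n < n" using cd by auto
    then show ?thesis
      unfolding prod index_conj_tr_mult[OF A A p[OF \<open>c - n < n\<close>] p[OF \<open>d - n < n\<close>]]
      using cd 3 by (auto simp: S_def index_symplectic_frame intro!: sum.cong)
  qed
qed

lemma unitary_symplectic_frame:
  assumes A: "A \<in> carrier_mat (2 * n) (2 * n)" "unitary_mat A"
    and p: "\<And>i. i < n \<Longrightarrow> p i < 2 * n" "inj_on p {..<n}"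
    and isotropic: "\<And>i j. i < n \<Longrightarrow> j < n \<Longrightarrow> A $$ (p i, p j) = 0"
  shows "unitary_mat (symplectic_frame n A p)"
proof (rule unitary_matI[OF symplectic_frame_carrier], rule eq_matI)
  fix c d assume "c < dim_row (1\<^sub>m (2 * n))" "d < dim_col (1\<^sub>m (2 * n))"
  then have cd: "c < 2 * n" "d < 2 * n" by auto
  then have "c - n < n" "d - n < n" by auto
  then show "(conj_tr (symplectic_frame n A p) * symplectic_frame n A p) $$ (c, d) = 1\<^sub>m (2 * n) $$ (c, d)"
    using index_conj_tr_symplectic_frame_mult[OF A(1) p(1) cd] cd p isotropic unitary_matD[OF A(2,1)] inj_on_eq_iff[OF p(2), of "c - n" "d - n"]
    by (auto simp: index_symplectic_frame inj_on_eq_iff[OF p(2)])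
qed auto

lemma symplectic_frame_intertwines_J_mat:
  assumes A: "A \<in> carrier_mat (2 * n) (2 * n)" "A * A = - 1\<^sub>m (2 * n)"
    and p: "\<And>i. i < n \<Longrightarrow> p i < 2 * n"
  shows "A * symplectic_frame n A p = symplectic_frame n A p * J_mat n"
proof (rule eq_matI)
  let ?S = "symplectic_frame n A p"
  fix r c assume "r < dim_row (?S * J_mat n)" "c < dim_col (?S * J_mat n)"
  then have rc: "r < 2 * n" "c < 2 * n" by auto
  have AS: "(A * ?S) $$ (r, c) = (\<Sum>k<2 * n. A $$ (r, k) * ?S $$ (k, c))"
    using A rc by (simp add: scalar_prod_def atLeast0LessThan)
  have SJ: "(?S * J_mat n) $$ (r, c) = (\<Sum>k<2 * n. ?S $$ (r, k) * J_mat n $$ (k, c))"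
    using rc by (simp add: scalar_prod_def atLeast0LessThan)
  show "(A * ?S) $$ (r, c) = (?S * J_mat n) $$ (r, c)"
  proof (cases "c < n")
    case True
    have "(A * ?S) $$ (r, c) = (\<Sum>k<2 * n. if k = p c then A $$ (r, k) else 0)"
      unfolding AS using rc True by (intro sum.cong) (auto simp: index_symplectic_frame)
    also have "\<dots> = A $$ (r, p c)" using p[OF True] by simp
    also have "\<dots> = (\<Sum>k<2 * n. if k = c + n then - ?S $$ (r, k) else 0)"
      using rc True by (simp add: index_symplectic_frame)
    also have "\<dots> = (?S * J_mat n) $$ (r, c)"
      unfolding SJ using rc True by (intro sum.cong) (auto simp: index_J_mat)
    finally show ?thesis .
  next
    case False
    then have c': "c - n < n" using rc by auto
    have "(A * ?S) $$ (r, c) = - (\<Sum>k<2 * n. A $$ (r, k) * A $$ (k, p (c - n)))"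
      unfolding AS using rc False
      by (subst sum_negf[symmetric], intro sum.cong) (auto simp: index_symplectic_frame)
    also have "\<dots> = - (A * A) $$ (r, p (c - n))"
      using A(1) rc p[OF c'] by (simp add: scalar_prod_def atLeast0LessThan)
    also have "\<dots> = (\<Sum>k<2 * n. if k = c - n then ?S $$ (r, k) else 0)"
      unfolding A(2) using rc c' p[OF c'] by (simp add: index_symplectic_frame)
    also have "\<dots> = (?S * J_mat n) $$ (r, c)"
      unfolding SJ using rc False by (intro sum.cong) (auto simp: index_J_mat)
    finally show ?thesis .
  qed
qed (use A in auto)

lemma mat_diag_mult_symplectic_frame:
  assumes p: "\<And>i. i < n \<Longrightarrow> p i < 2 * n"
    and conj: "\<And>r j. r < 2 * n \<Longrightarrow> j < n \<Longrightarrow> A $$ (r, p j) \<noteq> 0 \<Longrightarrow> f r = cnj (f (p j))"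
  defines "D \<equiv> mat_diag n (\<lambda>i. f (p i))"
  shows "mat_diag (2 * n) f * symplectic_frame n A p
    = symplectic_frame n A p * four_block_mat D (0\<^sub>m n n) (0\<^sub>m n n) (conj_tr D)"
proof -
  let ?S = "symplectic_frame n A p"
  let ?g = "\<lambda>i. if i < n then f (p i) else cnj (f (p (i - n)))"
  have "four_block_mat D (0\<^sub>m n n) (0\<^sub>m n n) (conj_tr D) = mat_diag (2 * n) ?g"
    unfolding D_def conj_tr_mat_diag four_block_mat_diag by (simp add: mult_2)
  moreover have "mat_diag (2 * n) f * ?S = ?S * mat_diag (2 * n) ?g"
  proof (rule eq_matI)
    fix r c assume "r < dim_row (?S * mat_diag (2 * n) ?g)" "c < dim_col (?S * mat_diag (2 * n) ?g)"
    then have rc: "r < 2 * n" "c < 2 * n" by auto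
    show "(mat_diag (2 * n) f * ?S) $$ (r, c) = (?S * mat_diag (2 * n) ?g) $$ (r, c)"
    proof (cases "c < n")
      case False
      then have c': "c - n < n" using rc by auto
      show ?thesis using conj[OF rc(1) c'] rc False
        by (auto simp: mat_diag_mult_left[of _ "2 * n" "2 * n"]
            mat_diag_mult_right[of _ "2 * n" "2 * n"] index_symplectic_frame)
    qed (use rc in \<open>auto simp: mat_diag_mult_left[of _ "2 * n" "2 * n"]
            mat_diag_mult_right[of _ "2 * n" "2 * n"] index_symplectic_frame\<close>)
  qed auto
  ultimately show ?thesis by simp
qed

lemma symplectic_frame_diagonalization:
  assumes A: "A \<in> carrier_mat (2 * n) (2 * n)" "unitary_mat A" "A * A = - 1\<^sub>m (2 * n)"
    and intertwining: "A * mat_diag (2 * n) f = mat_diag (2 * n) (\<lambda>i. cnj (f i)) * A"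
    and nonreal: "\<And>k. k < 2 * n \<Longrightarrow> Im (f k) \<noteq> 0"
  obtains S D where "S \<in> carrier_mat (2 * n) (2 * n)" "unitary_mat S" "A * S = S * J_mat n"
    "D \<in> carrier_mat n n" "diagonal_mat D"
    "mat_diag (2 * n) f * S = S * four_block_mat D (0\<^sub>m n n) (0\<^sub>m n n) (conj_tr D)"
proof -
  have conj: "f k = cnj (f j)" if "j < 2 * n" "k < 2 * n" "A $$ (j, k) \<noteq> 0" for j k
    using mat_diag_intertwining_entry[OF A(1) intertwining that] .
  define P where "P = {k. k < 2 * n \<and> 0 < Im (f k)}"
  define N where "N = {k. k < 2 * n \<and> Im (f k) < 0}"
  have PN: "P \<union> N = {..<2 * n}" "P \<inter> N = {}"
    using nonreal unfolding P_def N_def by (auto simp: neq_iff)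
  have zero: "A $$ (j, k) = 0" if "j \<in> P \<and> k \<in> P \<or> j \<in> N \<and> k \<in> N" for j k
    using that conj[of j k] unfolding P_def N_def by force
  have "card P + card N = 2 * n"
    using card_Un_disjoint[of P N] PN by (simp add: P_def N_def)
  then have "card P = n"
    using card_eq_if_unitary_off_diagonal_blocks[OF A(1,2) PN zero] by simp
  define p where "p i = sorted_list_of_set P ! i" for i
  have "finite P" by (simp add: P_def)
  then have pP: "p i \<in> P" if "i < n" for i
    using \<open>card P = n\<close> that unfolding p_def by (metis nth_mem set_sorted_list_of_set length_sorted_list_of_set)
  have p: "p i < 2 * n" if "i < n" for i using pP[OF that] by (simp add: P_def)
  have "inj_on p {..<n}"
    using \<open>finite P\<close> \<open>card P = n\<close> unfolding p_def
    by (intro inj_onI) (simp add: nth_eq_iff_index_eq[OF distinct_sorted_list_of_set])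
  define S where "S = symplectic_frame n A p"
  define D where "D = mat_diag n (\<lambda>i. f (p i))"
  have "unitary_mat S"
    unfolding S_def using zero pP by (intro unitary_symplectic_frame[OF A(1,2) p \<open>inj_on p {..<n}\<close>]) auto
  moreover have "A * S = S * J_mat n"
    unfolding S_def by (rule symplectic_frame_intertwines_J_mat[OF A(1,3) p])
  moreover have "mat_diag (2 * n) f * S = S * four_block_mat D (0\<^sub>m n n) (0\<^sub>m n n) (conj_tr D)"
    unfolding S_def D_def using conj p
    by (intro mat_diag_mult_symplectic_frame) (auto simp: complex_cnj_cancel_iff)
  moreover have "diagonal_mat D" by (simp add: D_def diagonal_mat_def mat_diag_def)
  ultimately show ?thesis using that[of S D] by (simp add: S_def D_def)
qed

theorem lemma2p2:
  fixes n :: nat and W :: "complex mat"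
  assumes "n \<ge> 1"
    and "W \<in> carrier_mat (2*n) (2*n)"
    and "normal_mat W"
    and "skew_hamiltonian n W"
    and "\<forall>ev. eigenvalue W ev \<longrightarrow> Im ev \<noteq> 0"
  shows "\<exists>U D. U \<in> carrier_mat (2*n) (2*n) \<and> unitary_mat U \<and> symplectic n U \<and>
           D \<in> carrier_mat n n \<and> diagonal_mat D \<and>
           W = U * four_block_mat D (0\<^sub>m n n) (0\<^sub>m n n) (conj_tr D) * conj_tr U"
proof -
  let ?J = "J_mat n"
  obtain Q f where Q: "Q \<in> carrier_mat (2 * n) (2 * n)" "unitary_mat Q"
    and W: "W = Q * mat_diag (2 * n) f * conj_tr Q"
    using normal_mat_unitary_diagonalizable[OF assms(2,3)] by blast
  define A where "A = conj_tr Q * ?J * Q"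
  have "A \<in> carrier_mat (2 * n) (2 * n)" "unitary_mat A" "A * A = - 1\<^sub>m (2 * n)"
    using unitary_conj_J_mat[OF Q] unfolding A_def by auto
  moreover have "A * mat_diag (2 * n) f = mat_diag (2 * n) (\<lambda>i. cnj (f i)) * A"
    using unitary_conj_intertwining[OF Q W J_mat_carrier] assms(4)
    unfolding A_def skew_hamiltonian_iff by simp
  moreover have "Im (f k) \<noteq> 0" if "k < 2 * n" for k
    using assms(5) eigenvalue_unitary_diagonalization[OF Q W that] by simp
  ultimately obtain S D where S: "S \<in> carrier_mat (2 * n) (2 * n)" "unitary_mat S" "A * S = S * ?J"
    and D: "D \<in> carrier_mat n n" "diagonal_mat D"
    and diag: "mat_diag (2 * n) f * S = S * four_block_mat D (0\<^sub>m n n) (0\<^sub>m n n) (conj_tr D)"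
    using symplectic_frame_diagonalization by metis
  let ?DD = "four_block_mat D (0\<^sub>m n n) (0\<^sub>m n n) (conj_tr D)"
  have DD: "?DD \<in> carrier_mat (2 * n) (2 * n)" using D by (simp add: mult_2)
  have "W = Q * (S * ?DD * conj_tr S) * conj_tr Q"
    unfolding W unitary_intertwining_congruence[OF S(1,2) mat_diag_dim DD diag] ..
  also have "\<dots> = (Q * S) * ?DD * conj_tr (Q * S)"
    by (rule conj_tr_congruence_mult[OF Q(1) S(1) DD])
  finally show ?thesis
    using Q S D symplectic_mult[OF Q(1) S(1,2)] unitary_mat_mult[OF Q(2,1) S(2,1)]
    unfolding A_def by (intro exI[of _ "Q * S"] exI[of _ D]) auto
qed

end
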